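(* Let $p > 0$, let $X$ be a random variable on a probability space with $X \ge 0$ almost surely and $X \in L^p$ (i.e. $E X^p < \infty$), and let $0 < r < s \le p/2$. Then $$\operatorname{Var}(X^r)^{1/r} \le \operatorname{Var}(X^s)^{1/s}.$$
   Context: $\operatorname{Var}(Y) = E(Y^2) - (EY)^2$ denotes the variance of a square-integrable random variable $Y$. Statements such as $X\ge 0$ are meant almost surely. *)

theory Defs
  imports "HOL-Probability.Probability"
begin

end

theory Submission
  imports Defs
begin

text \<open>
  Put U = X^r and t = s/r \<ge> 1; it suffices to show Var(U)^t \<le> Var(U^t) for U \<ge> 0.
  With c = (E U^t)^(1/t) we have Var U \<le> E (U - c)^2, and by Jensen
  (E (U - c)^2)^t \<le> E |U - c|^(2t). Superadditivity of x \<mapsto> x^t on [0, \<infinity>) gives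
  |U - c|^t \<le> |U^t - c^t| pointwise, so the last expectation is at most
  E (U^t - E U^t)^2 = Var(U^t).
\<close>

lemma powr_above_tangent:
  fixes t m w :: real
  assumes t: "t \<ge> 1" and m: "m > 0" and w: "w \<ge> 0"
  shows "m powr t + t * m powr (t - 1) * (w - m) \<le> w powr t"
proof (cases "w = 0")
  case True
  have "m powr t = m * m powr (t - 1)"
    using m by (simp add: powr_mult_base)
  then show ?thesis using True t m by (simp add: algebra_simps)
next
  case False
  with w have "w > 0" by simp
  have deriv: "((\<lambda>x. x powr t) has_field_derivative t * m powr (t - 1)) (at m within {0<..})"
    using m by (auto intro!: derivative_eq_intros)
  have "t * m powr (t - 1) * (w - m) \<le> w powr t - m powr t"
    by (rule convex_on_imp_above_tangent[OF powr_convex[OF t] _ _ _ deriv])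
       (use m \<open>w > 0\<close> in \<open>auto simp: interior_open\<close>)
  then show ?thesis by simp
qed

lemma powr_add_le_powr_add:
  fixes a b t :: real
  assumes a: "a \<ge> 0" and b: "b \<ge> 0" and t: "t \<ge> 1"
  shows "a powr t + b powr t \<le> (a + b) powr t"
proof -
  have "a powr t = a * a powr (t - 1)" "b powr t = b * b powr (t - 1)"
    using a b by (simp_all add: powr_mult_base)
  moreover have "a powr (t - 1) \<le> (a + b) powr (t - 1)" "b powr (t - 1) \<le> (a + b) powr (t - 1)"
    using a b t by (simp_all add: powr_mono2)
  ultimately have "a powr t + b powr t \<le> (a + b) * (a + b) powr (t - 1)"
    using a b by (simp add: distrib_right add_mono mult_left_mono)
  also have "\<dots> = (a + b) powr t"
    using a b by (simp add: powr_mult_base)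
  finally show ?thesis .
qed

lemma abs_diff_powr_le:
  fixes u c t :: real
  assumes "u \<ge> 0" "c \<ge> 0" "t \<ge> 1"
  shows "\<bar>u - c\<bar> powr t \<le> \<bar>u powr t - c powr t\<bar>"
proof (cases "c \<le> u")
  case True
  have "c powr t + (u - c) powr t \<le> (c + (u - c)) powr t"
    by (rule powr_add_le_powr_add) (use assms True in auto)
  then show ?thesis using True by simp
next
  case False
  have "u powr t + (c - u) powr t \<le> (u + (c - u)) powr t"
    by (rule powr_add_le_powr_add) (use assms False in auto)
  then show ?thesis using False by simp
qed

lemma power2_powr: "(x powr a)\<^sup>2 = x powr (2 * a)"
  for x a :: real
  by (cases "x = 0") (simp_all add: powr_power)

lemma powr_power2_abs: "(x\<^sup>2) powr a = (\<bar>x\<bar> powr a)\<^sup>2"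
  for x a :: real
proof -
  have "x\<^sup>2 = \<bar>x\<bar> * \<bar>x\<bar>" by (simp add: power2_eq_square)
  then show ?thesis by (simp only: powr_mult power2_eq_square)
qed

context prob_space
begin

lemma integrable_powr_mono:
  fixes X :: "'a \<Rightarrow> real"
  assumes Xm: "X \<in> borel_measurable M" and X0: "AE x in M. X x \<ge> 0"
    and int_p: "integrable M (\<lambda>x. X x powr p)" and q: "0 \<le> q" "q \<le> p"
  shows "integrable M (\<lambda>x. X x powr q)"
proof (rule Bochner_Integration.integrable_bound[of _ "\<lambda>x. 1 + X x powr p"])
  show "integrable M (\<lambda>x. 1 + X x powr p)" using int_p by simp
  show "(\<lambda>x. X x powr q) \<in> borel_measurable M" using Xm by measurable
  show "AE x in M. norm (X x powr q) \<le> norm (1 + X x powr p)"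
    using X0
  proof eventually_elim
    case (elim x)
    have "X x powr q \<le> 1 \<or> X x powr q \<le> X x powr p"
      using elim q by (cases "X x \<le> 1") (auto intro: powr_le1 powr_mono)
    then show ?case by (auto intro: add_increasing add_increasing2)
  qed
qed

lemma expectation_powr_le:
  fixes W :: "'a \<Rightarrow> real"
  assumes t: "t \<ge> 1" and W0: "AE x in M. W x \<ge> 0"
    and int_W: "integrable M W" and int_Wt: "integrable M (\<lambda>x. W x powr t)"
  shows "expectation W powr t \<le> expectation (\<lambda>x. W x powr t)"
proof -
  define m where "m = expectation W"
  have "m \<ge> 0" unfolding m_def using W0 by (rule integral_nonneg_AE)
  show ?thesis
  proof (cases "m = 0")
    case True
    then show ?thesis unfolding m_def[symmetric] by (simp add: integral_nonneg_AE)
  next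
    case False
    with \<open>m \<ge> 0\<close> have "m > 0" by simp
    \<comment> \<open>Integrate the tangent line of \<open>x \<mapsto> x\<^sup>t\<close> at the mean, which lies below the graph.
      (\<open>jensens_inequality\<close> does not apply: it needs an open interval, but \<open>W\<close> may vanish.)\<close>
    have "expectation (\<lambda>x. m powr t + t * m powr (t - 1) * (W x - m))
          \<le> expectation (\<lambda>x. W x powr t)"
      by (rule integral_mono_AE)
         (use int_W int_Wt W0 in \<open>auto intro!: powr_above_tangent[OF t \<open>m > 0\<close>]\<close>)
    moreover have "expectation (\<lambda>x. m powr t + t * m powr (t - 1) * (W x - m)) = m powr t"
      using int_W prob_space by (simp add: m_def)
    ultimately show ?thesis unfolding m_def by simp
  qed
qed

lemma variance_le_expectation_sq_diff:
  fixes U :: "'a \<Rightarrow> real"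
  assumes Um: "U \<in> borel_measurable M" and int_U2: "integrable M (\<lambda>x. (U x)\<^sup>2)"
  shows "variance U \<le> expectation (\<lambda>x. (U x - c)\<^sup>2)"
proof -
  have int_U: "integrable M U" using square_integrable_imp_integrable[OF Um int_U2] .
  have "expectation (\<lambda>x. (U x - c)\<^sup>2) = variance U + (expectation U - c)\<^sup>2"
    using int_U int_U2 prob_space by (simp add: variance_eq power2_diff) (simp add: power2_eq_square)
  then show ?thesis by simp
qed

lemma variance_powr_le:
  fixes U :: "'a \<Rightarrow> real"
  assumes t: "t \<ge> 1" and Um: "U \<in> borel_measurable M" and U0: "AE x in M. U x \<ge> 0"
    and int_U2: "integrable M (\<lambda>x. (U x)\<^sup>2)" and int_Ut2: "integrable M (\<lambda>x. (U x powr t)\<^sup>2)"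
  shows "variance U powr t \<le> variance (\<lambda>x. U x powr t)"
proof -
  define m where "m = expectation (\<lambda>x. U x powr t)"
  define c where "c = m powr (1 / t)"
  have "m \<ge> 0" unfolding m_def by (simp add: integral_nonneg_AE)
  then have c_powr: "c powr t = m" unfolding c_def using t by (simp add: powr_powr)
  have Utm: "(\<lambda>x. U x powr t) \<in> borel_measurable M" using Um by measurable
  have int_U: "integrable M U" using square_integrable_imp_integrable[OF Um int_U2] .
  have int_Ut: "integrable M (\<lambda>x. U x powr t)" using square_integrable_imp_integrable[OF Utm int_Ut2] .
  define W where "W = (\<lambda>x. (U x - c)\<^sup>2)"
  have Wm: "W \<in> borel_measurable M" unfolding W_def using Um by measurable
  have int_W: "integrable M W" unfolding W_def power2_diff using int_U int_U2 by simp
  have int_D: "integrable M (\<lambda>x. (U x powr t - m)\<^sup>2)"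
    unfolding power2_diff using int_Ut int_Ut2 by simp
  have W_powr_le: "AE x in M. W x powr t \<le> (U x powr t - m)\<^sup>2"
    using U0
  proof eventually_elim
    case (elim x)
    have "\<bar>U x - c\<bar> powr t \<le> \<bar>U x powr t - c powr t\<bar>"
      by (rule abs_diff_powr_le) (use elim t in \<open>auto simp: c_def\<close>)
    then have "(\<bar>U x - c\<bar> powr t)\<^sup>2 \<le> (\<bar>U x powr t - c powr t\<bar>)\<^sup>2"
      by (rule power_mono) simp
    then show ?case unfolding W_def powr_power2_abs c_powr by simp
  qed
  have int_Wt: "integrable M (\<lambda>x. W x powr t)"
    by (rule Bochner_Integration.integrable_bound[OF int_D]) (use Wm W_powr_le in auto)
  have "variance U powr t \<le> expectation W powr t"
    by (rule powr_mono2)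
       (use t variance_le_expectation_sq_diff[OF Um int_U2, of c] in \<open>auto simp: W_def\<close>)
  also have "\<dots> \<le> expectation (\<lambda>x. W x powr t)"
    by (rule expectation_powr_le[OF t _ int_W int_Wt]) (simp add: W_def)
  also have "\<dots> \<le> expectation (\<lambda>x. (U x powr t - m)\<^sup>2)"
    by (rule integral_mono_AE[OF int_Wt int_D W_powr_le])
  finally show ?thesis unfolding m_def .
qed

end

theorem corollary2p3:
  fixes M :: "'a measure" and X :: "'a \<Rightarrow> real" and p r s :: real
  assumes "prob_space M"
    and "X \<in> borel_measurable M"
    and "AE x in M. X x \<ge> 0"
    and "p > 0"
    and "integrable M (\<lambda>x. X x powr p)"
    and "0 < r" and "r < s" and "s \<le> p / 2"
  shows "prob_space.variance M (\<lambda>x. X x powr r) powr (1 / r)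
           \<le> prob_space.variance M (\<lambda>x. X x powr s) powr (1 / s)"
proof -
  interpret prob_space M by fact
  note Xm = assms(2) and X0 = assms(3) and int_p = assms(5) and r = assms(6) and rs = assms(7)
  define t where "t = s / r"
  have t: "t \<ge> 1" and rt: "r * t = s" unfolding t_def using r rs by simp_all
  have int_2r: "integrable M (\<lambda>x. (X x powr r)\<^sup>2)" and int_2s: "integrable M (\<lambda>x. (X x powr s)\<^sup>2)"
    unfolding power2_powr using assms(6-8)
    by (auto intro!: integrable_powr_mono[OF Xm X0 int_p])
  have "variance (\<lambda>x. X x powr r) powr t \<le> variance (\<lambda>x. X x powr s)"
    using variance_powr_le[OF t _ _ int_2r] int_2s Xm by (simp add: powr_powr rt)
  then have "(variance (\<lambda>x. X x powr r) powr t) powr (1 / s)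
             \<le> variance (\<lambda>x. X x powr s) powr (1 / s)"
    using r rs by (intro powr_mono2) auto
  then show ?thesis
    using r rs by (simp add: powr_powr t_def)
qed

end
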